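(* Let $\beta_1=\frac{p_1}{q_1}>1$ and $\beta_2=\frac{p_2}{q_2}>1$ with $\gcd(p_1,q_1)=\gcd(p_2,q_2)=1$, and suppose $p_1\neq kq_2$ for every $k\in\mathbb{N}$. Write $\frac{p_1}{q_2}=\frac{p}{z}$ with $\gcd(p,z)=1$ (so $z>1$). Then for every $n\ge 1$ there are integers $t_n$ and $m_n\ge 1$ such that $T_{\beta_1\circ\beta_2}^n(1)=\frac{t_n}{m_n z^n}$ and $\gcd(t_n,z)=1$. Consequently the set $O_{T_{\beta_1\circ\beta_2}}(1)$ is infinite.
   Context: For a real number $\gamma>1$ let $T_\gamma:[0,1)\to[0,1)$, $T_\gamma(x)=\gamma x \bmod 1$, and $T_{\beta_1\circ\beta_2}:=T_{\beta_1}\circ T_{\beta_2}$. The value at $1$ is defined as the left limit, $T_{\beta_1\circ\beta_2}(1):=\lim_{x\nearrow1}T_{\beta_1\circ\beta_2}(x)$ (equivalently $T_{\beta_2}(1):=1$ and $T_{\beta_1}(1):=\lim_{x\nearrow 1}T_{\beta_1}(x)$), and $T^n_{\beta_1\circ\beta_2}(1):=T^{n-1}_{\beta_1\circ\beta_2}(T_{\beta_1\circ\beta_2}(1))$ for $n\ge2$. The orbit set is $O_{T_{\beta_1\circ\beta_2}}(1):=\{T^k_{\beta_1\circ\beta_2}(1):k\ge1\}$. *)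

theory Defs
  imports Complex_Main
begin

definition beta_map :: "real \<Rightarrow> real \<Rightarrow> real" where
  "beta_map \<gamma> x = \<gamma> * x - of_int \<lfloor>\<gamma> * x\<rfloor>"

definition comp_map :: "real \<Rightarrow> real \<Rightarrow> real \<Rightarrow> real" where
  "comp_map \<beta>1 \<beta>2 x = beta_map \<beta>1 (beta_map \<beta>2 x)"

definition comp_map_at_one :: "real \<Rightarrow> real \<Rightarrow> real" where
  "comp_map_at_one \<beta>1 \<beta>2 = Lim (at_left 1) (comp_map \<beta>1 \<beta>2)"

definition comp_orbit :: "real \<Rightarrow> real \<Rightarrow> nat \<Rightarrow> real" where
  "comp_orbit \<beta>1 \<beta>2 n = (comp_map \<beta>1 \<beta>2 ^^ (n - 1)) (comp_map_at_one \<beta>1 \<beta>2)"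

definition orbit_set :: "real \<Rightarrow> real \<Rightarrow> real set" where
  "orbit_set \<beta>1 \<beta>2 = {comp_orbit \<beta>1 \<beta>2 k | k. k \<ge> 1}"

end

theory Submission
  imports Defs
begin

(* Every application of T = T_beta1 o T_beta2, and also its left limit at 1, has the form
   x |-> beta1 (beta2 x - a) - b with integers a, b, and beta1 beta2 = p p2 / (q1 z).
   Since z divides q2, which is prime to p2, and z is prime to p, such a map sends
   t / (q1^n z^n) with t prime to z to t' / (q1^(n+1) z^(n+1)) with t' = p p2 t (mod z),
   again prime to z.  Starting from 1 = 1 / (q1^0 z^0) this gives the form of T^n(1).
   As z > 1 (because q2 does not divide p1), the exact power of z in the reduced
   denominator determines n, so the points T^n(1) are pairwise distinct. *)

(* The left limit of beta_map gamma at y: at a point with gamma y integral it is 1, not 0,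
   hence the ceiling. *)
definition beta_map_left :: "real \<Rightarrow> real \<Rightarrow> real" where
  "beta_map_left \<gamma> y = \<gamma> * y - of_int (\<lceil>\<gamma> * y\<rceil> - 1)"

lemma filterlim_beta_map_at_left:
  assumes "\<gamma> > 0"
  shows "filterlim (beta_map \<gamma>) (at_left (beta_map_left \<gamma> y)) (at_left y)"
proof -
  define c where "c = \<lceil>\<gamma> * y\<rceil> - 1"
  have c: "of_int c < \<gamma> * y" "\<gamma> * y \<le> of_int c + 1"
    unfolding c_def by linarith+
  have "eventually (\<lambda>x. x \<in> {of_int c / \<gamma><..<y}) (at_left y)"
    using c assms by (intro eventually_at_left_real) (simp add: field_simps)
  then have near: "eventually (\<lambda>x. beta_map \<gamma> x = \<gamma> * x - of_int c \<and> x < y) (at_left y)"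
  proof (rule eventually_mono)
    fix x assume x: "x \<in> {of_int c / \<gamma><..<y}"
    then have "of_int c < \<gamma> * x" "\<gamma> * x < \<gamma> * y"
      using assms by (auto simp: field_simps)
    then have "\<lfloor>\<gamma> * x\<rfloor> = c"
      using c by linarith
    then show "beta_map \<gamma> x = \<gamma> * x - of_int c \<and> x < y"
      using x by (simp add: beta_map_def)
  qed
  have "((\<lambda>x. \<gamma> * x - of_int c) \<longlongrightarrow> beta_map_left \<gamma> y) (at_left y)"
    unfolding beta_map_left_def c_def[symmetric]
    by (intro tendsto_intros tendsto_ident_at)
  then have "(beta_map \<gamma> \<longlongrightarrow> beta_map_left \<gamma> y) (at_left y)"
    by (rule Lim_transform_eventually) (use near in \<open>auto elim: eventually_mono\<close>)
  moreover have "eventually (\<lambda>x. beta_map \<gamma> x < beta_map_left \<gamma> y) (at_left y)"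
    using near by eventually_elim (use assms in \<open>simp add: beta_map_left_def c_def\<close>)
  ultimately show ?thesis
    by (rule tendsto_imp_filterlim_at_left)
qed

lemma comp_map_at_one_eq:
  assumes "\<beta>1 > 0" "\<beta>2 > 0"
  shows "comp_map_at_one \<beta>1 \<beta>2 = beta_map_left \<beta>1 (beta_map_left \<beta>2 1)"
proof -
  have "filterlim (\<lambda>x. beta_map \<beta>1 (beta_map \<beta>2 x))
          (at_left (beta_map_left \<beta>1 (beta_map_left \<beta>2 1))) (at_left 1)"
    by (rule filterlim_compose[OF filterlim_beta_map_at_left filterlim_beta_map_at_left]) (use assms in auto)
  then have "(comp_map \<beta>1 \<beta>2 \<longlongrightarrow> beta_map_left \<beta>1 (beta_map_left \<beta>2 1)) (at_left 1)"
    by (simp add: filterlim_at comp_map_def[abs_def])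
  then show ?thesis
    unfolding comp_map_at_one_def by (rule tendsto_Lim[rotated]) simp
qed

definition frac_over_powers :: "nat \<Rightarrow> nat \<Rightarrow> nat \<Rightarrow> real \<Rightarrow> bool" where
  "frac_over_powers q z n x \<longleftrightarrow>
     (\<exists>t::int. coprime t (int z) \<and> x = of_int t / (real q ^ n * real z ^ n))"

lemma frac_over_powers_0_one: "frac_over_powers q z 0 1"
  unfolding frac_over_powers_def by (intro exI[of _ 1]) simp

lemma frac_over_powers_step:
  fixes a b :: int
  assumes "q1 > 0" "q2 > 0" "z > 0" "p1 * z = p * q2" "coprime (p * p2) z"
    and "frac_over_powers q1 z n x"
  shows "frac_over_powers q1 z (Suc n) (real p1 / real q1 * (real p2 / real q2 * x - of_int a) - of_int b)"
proof -
  obtain t where t: "coprime t (int z)" "x = of_int t / (real q1 ^ n * real z ^ n)"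
    using assms(6) unfolding frac_over_powers_def by blast
  define K where "K = - ((int p1 * a + b * int q1) * int q1 ^ n * int z ^ n)"
  have "coprime (int p * int p2 * t) (int z)"
    using assms(5) t(1) by (simp flip: of_nat_mult)
  then have "coprime (int p * int p2 * t + K * int z) (int z)"
    by (metis coprime_iff_gcd_eq_1 gcd_add_mult gcd.commute add.commute)
  moreover have "real p1 = real p * real q2 / real z"
    using assms(3,4) by (simp add: field_simps flip: of_nat_mult)
  then have "real p1 / real q1 * (real p2 / real q2 * x - of_int a) - of_int b
      = of_int (int p * int p2 * t + K * int z) / (real q1 ^ Suc n * real z ^ Suc n)"
    using assms(1-3) unfolding t(2) K_def by (simp add: field_simps)
  ultimately show ?thesis
    unfolding frac_over_powers_def by blast
qed

lemma frac_over_powers_unique: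
  assumes "q > 0" "z > 1" "frac_over_powers q z n x" "frac_over_powers q z k x"
  shows "n = k"
  using assms(3,4)
proof (induction n k rule: linorder_wlog)
  case (le n k)
  obtain t t' where t: "x = of_int t / (real q ^ n * real z ^ n)"
    and t': "coprime t' (int z)" "x = of_int t' / (real q ^ k * real z ^ k)"
    using le.prems unfolding frac_over_powers_def by blast
  show "n = k"
  proof (rule ccontr)
    assume "n \<noteq> k"
    with le.hyps obtain d where d: "k = n + Suc d"
      using less_iff_Suc_add by (auto simp: order.order_iff_strict)
    have "real_of_int t' = of_int (t * (int q * int z) ^ Suc d)"
      using t t' assms(1,2) unfolding d by (simp add: field_simps power_add)
    then have "t' = t * (int q * int z) ^ Suc d"
      by (rule of_int_eq_iff[THEN iffD1])
    then have "int z dvd t'"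
      by simp
    then have "is_unit (int z)"
      using t'(1) by (meson coprime_common_divisor dvd_refl)
    then show False
      using assms(2) by simp
  qed
qed (auto simp: eq_commute)

lemma frac_over_powers_imp_denominator:
  assumes "q > 0" "frac_over_powers q z n x"
  shows "\<exists>t m :: int. m \<ge> 1 \<and> x = of_int t / (of_int m * real z ^ n) \<and> coprime t (int z)"
proof -
  obtain t where "coprime t (int z)" "x = of_int t / (real q ^ n * real z ^ n)"
    using assms(2) unfolding frac_over_powers_def by blast
  moreover have "int q ^ n \<ge> 1"
    using assms(1) by simp
  ultimately show ?thesis
    by (intro exI[of _ t] exI[of _ "int q ^ n"]) simp
qed

lemma frac_over_powers_comp_orbit:
  assumes "p1 > 0" "p2 > 0" "q1 > 0" "q2 > 0" "z > 0"
    and "p1 * z = p * q2" "coprime (p * p2) z" "n \<ge> 1"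
  shows "frac_over_powers q1 z n (comp_orbit (real p1 / real q1) (real p2 / real q2) n)"
proof -
  define \<beta>1 where "\<beta>1 = real p1 / real q1"
  define \<beta>2 where "\<beta>2 = real p2 / real q2"
  note step = frac_over_powers_step[OF assms(3-7), folded \<beta>1_def \<beta>2_def]
  have "frac_over_powers q1 z (Suc k) ((comp_map \<beta>1 \<beta>2 ^^ k) (comp_map_at_one \<beta>1 \<beta>2))" for k
  proof (induction k)
    case 0
    have "\<beta>1 > 0" "\<beta>2 > 0"
      using assms(1-4) unfolding \<beta>1_def \<beta>2_def by auto
    then show ?case
      using step[OF frac_over_powers_0_one]
      by (simp add: comp_map_at_one_eq beta_map_left_def del: of_int_diff)
  next
    case (Suc k)
    then show ?case
      using step by (simp add: comp_map_def beta_map_def)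
  qed
  from this[of "n - 1"] show ?thesis
    using assms(8) unfolding comp_orbit_def \<beta>1_def \<beta>2_def by simp
qed

lemma infinite_orbit_set_if_frac_over_powers:
  assumes "q > 0" "z > 1" "\<And>n. n \<ge> 1 \<Longrightarrow> frac_over_powers q z n (comp_orbit \<beta>1 \<beta>2 n)"
  shows "infinite (orbit_set \<beta>1 \<beta>2)"
proof -
  have "inj_on (comp_orbit \<beta>1 \<beta>2) {1..}"
    using frac_over_powers_unique[OF assms(1,2)] assms(3) by (intro inj_onI) (metis atLeast_iff)
  moreover have "orbit_set \<beta>1 \<beta>2 = comp_orbit \<beta>1 \<beta>2 ` {1..}"
    unfolding orbit_set_def by auto
  ultimately show ?thesis
    using finite_imageD infinite_Ici by metis
qed

lemma reduced_fraction_cross_mult: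
  fixes p1 q2 p z :: nat
  assumes "p1 > 0" "q2 > 0" "real p1 / real q2 = real p / real z" "coprime p z"
  shows "p1 * z = p * q2" and "z dvd q2"
proof -
  have "z \<noteq> 0"
  proof
    assume "z = 0"
    with assms(3) have "real p1 / real q2 = 0"
      by simp
    with assms(1,2) show False
      by simp
  qed
  then have "real p1 * real z = real p * real q2"
    using assms(2,3) by (simp add: field_simps)
  then show cross: "p1 * z = p * q2"
    by (simp flip: of_nat_mult)
  then have "z dvd p * q2"
    by (metis dvd_triv_right)
  then show "z dvd q2"
    using assms(4) by (simp add: coprime_commute coprime_dvd_mult_right_iff)
qed

theorem lemma4p1:
  fixes p1 q1 p2 q2 p z :: nat
  assumes "q1 > 0" and "q2 > 0"
    and "real p1 / real q1 > 1" and "real p2 / real q2 > 1"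
    and "coprime p1 q1" and "coprime p2 q2"
    and "\<forall>k::nat. p1 \<noteq> k * q2"
    and "real p1 / real q2 = real p / real z" and "coprime p z"
  shows "(\<forall>n\<ge>1. \<exists>t m :: int. m \<ge> 1 \<and>
            comp_orbit (real p1 / real q1) (real p2 / real q2) n = of_int t / (of_int m * real z ^ n) \<and>
            coprime t (int z))
         \<and> infinite (orbit_set (real p1 / real q1) (real p2 / real q2))"
proof -
  have "p1 > 0" "p2 > 0"
    using assms(1-4) by (auto intro: Nat.gr0I)
  note cross = reduced_fraction_cross_mult[OF \<open>p1 > 0\<close> assms(2,8,9)]
  have "z > 0"
    using dvd_pos_nat[OF assms(2) cross(2)] .
  moreover have "z \<noteq> 1"
    using cross(1) assms(7) by auto
  ultimately have "z > 1"
    by simp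
  have "coprime p2 z"
    using assms(6) cross(2) coprime_divisors dvd_refl by blast
  then have "coprime (p * p2) z"
    using assms(9) by simp
  note orbit = frac_over_powers_comp_orbit[OF \<open>p1 > 0\<close> \<open>p2 > 0\<close> assms(1,2) \<open>z > 0\<close> cross(1) this]
  have "\<exists>t m :: int. m \<ge> 1 \<and>
      comp_orbit (real p1 / real q1) (real p2 / real q2) n = of_int t / (of_int m * real z ^ n) \<and>
      coprime t (int z)" if "n \<ge> 1" for n
    using frac_over_powers_imp_denominator[OF assms(1) orbit[OF that]] .
  moreover have "infinite (orbit_set (real p1 / real q1) (real p2 / real q2))"
    using infinite_orbit_set_if_frac_over_powers[OF assms(1) \<open>z > 1\<close> orbit] .
  ultimately show ?thesis
    by blast
qed

end
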